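(* Let $\{\Pi_{\bm{x}}\}_{\bm{x}\in\{0,1\}^n}$ be a POVM on $(\mathbb{C}^2)^{\otimes n}$. For $\theta\in\mathbb{R}$ let $|\Phi_\theta\rangle=|+_\theta\rangle^{\otimes n}$ with $|+_\theta\rangle=(|0\rangle+e^{i\theta}|1\rangle)/\sqrt2$, let $W^\theta_\Phi=\frac{1}{2^n}\mathbb{1}-|\Phi_\theta\rangle\langle\Phi_\theta|$, and let $\mathscr{Q}^\theta_\Phi(\Pi_{\bm{x}})=2^n\,|\operatorname{tr}[W^\theta_\Phi\Pi_{\bm{x}}]|$. Then for every $\bm{x}$, $$\mathscr{Q}^\theta_\Phi(\Pi_{\bm{x}})=2\left|\sum_{\bm{y}<\bm{z}}\Big(-\operatorname{Re}[\Pi_{\bm{x}}(\bm{y},\bm{z})]\cos[h(\bm{y},\bm{z})\theta]+\operatorname{Im}[\Pi_{\bm{x}}(\bm{y},\bm{z})]\sin[h(\bm{y},\bm{z})\theta]\Big)\right|,$$ where $h(\bm{y},\bm{z})=|\bm{z}|-|\bm{y}|$.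
   Context: $\Pi(\bm{y},\bm{z})=\langle\bm{y}|\Pi|\bm{z}\rangle$ is the entry in row $\bm{y}$, column $\bm{z}$ with respect to the computational basis $\{|\bm{y}\rangle:\bm{y}\in\{0,1\}^n\}$; $|\bm{y}|$ is the Hamming weight of $\bm{y}$; the sum over $\bm{y}<\bm{z}$ runs over all pairs of distinct bit strings with respect to a fixed total order (e.g. lexicographic), so that each unordered pair is counted once. *)

theory Defs
  imports Complex_Main "HOL-Library.List_Lexorder"
begin

text \<open>Computational basis of (C^2)^n indexed by bit strings (bool lists of length n).
 Operators are matrices bool list => bool list => complex, restricted to these indices.
 Bit strings are totally ordered lexicographically (False < True).\<close>

definition bitstrings :: "nat \<Rightarrow> bool list set" where
  "bitstrings n = {xs. length xs = n}"

definition hamming_weight :: "bool list \<Rightarrow> nat" where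
  "hamming_weight xs = length (filter id xs)"

type_synonym op = "bool list \<Rightarrow> bool list \<Rightarrow> complex"

definition hermitian :: "nat \<Rightarrow> op \<Rightarrow> bool" where
  "hermitian n A \<longleftrightarrow> (\<forall>y\<in>bitstrings n. \<forall>z\<in>bitstrings n. A z y = cnj (A y z))"

definition psd :: "nat \<Rightarrow> op \<Rightarrow> bool" where
  "psd n A \<longleftrightarrow> hermitian n A \<and>
     (\<forall>v :: bool list \<Rightarrow> complex.
        let q = (\<Sum>y\<in>bitstrings n. \<Sum>z\<in>bitstrings n. cnj (v y) * A y z * v z)
        in Im q = 0 \<and> Re q \<ge> 0)"

definition is_POVM :: "nat \<Rightarrow> (bool list \<Rightarrow> op) \<Rightarrow> bool" where
  "is_POVM n P \<longleftrightarrow> (\<forall>x\<in>bitstrings n. psd n (P x)) \<and>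
     (\<forall>y\<in>bitstrings n. \<forall>z\<in>bitstrings n.
        (\<Sum>x\<in>bitstrings n. P x y z) = (if y = z then 1 else 0))"

definition trace_prod :: "nat \<Rightarrow> op \<Rightarrow> op \<Rightarrow> complex" where
  "trace_prod n A B = (\<Sum>y\<in>bitstrings n. \<Sum>z\<in>bitstrings n. A y z * B z y)"

definition plus_amp :: "real \<Rightarrow> bool \<Rightarrow> complex" where
  "plus_amp \<theta> b = (if b then cis \<theta> else 1) / complex_of_real (sqrt 2)"

definition Phi :: "real \<Rightarrow> bool list \<Rightarrow> complex" where
  "Phi \<theta> y = prod_list (map (plus_amp \<theta>) y)"

definition W_Phi :: "nat \<Rightarrow> real \<Rightarrow> op" where
  "W_Phi n \<theta> y z = (if y = z then 1 / 2 ^ n else 0) - Phi \<theta> y * cnj (Phi \<theta> z)"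

definition Q_Phi :: "nat \<Rightarrow> real \<Rightarrow> op \<Rightarrow> real" where
  "Q_Phi n \<theta> A = 2 ^ n * cmod (trace_prod n (W_Phi n \<theta>) A)"

end

theory Submission
  imports Defs
begin

text \<open>The amplitude of \<open>\<Phi>\<^sub>\<theta>\<close> on the basis string y is e^(i |y| \<theta>) / sqrt 2 ^ n, so the
  (y, z) entry of 2^n W is \<delta>(y, z) - e^(i (|y| - |z|) \<theta>). In the trace against a Hermitian
  operator the diagonal terms cancel, and the terms for (y, z) and (z, y) are complex conjugates
  of each other, so each pair contributes twice a real part.\<close>

lemma finite_bitstrings: "finite (bitstrings n)"
  using finite_lists_length_eq[of "UNIV :: bool set" n] by (simp add: bitstrings_def)

lemma sum_square_diagonal_pairs:
  fixes f :: "'a::linorder \<Rightarrow> 'a \<Rightarrow> 'b::comm_monoid_add"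
  assumes "finite B"
  shows "(\<Sum>y\<in>B. \<Sum>z\<in>B. f y z) =
    (\<Sum>y\<in>B. f y y) + (\<Sum>(y, z)\<in>{(y, z). y \<in> B \<and> z \<in> B \<and> y < z}. f y z + f z y)"
proof -
  define L where "L = {(y, z). y \<in> B \<and> z \<in> B \<and> y < z}"
  define D where "D = (\<lambda>y. (y, y)) ` B"
  have B_square: "B \<times> B = D \<union> (L \<union> prod.swap ` L)"
    unfolding D_def L_def using linorder_neqE by (auto simp: image_iff)
  have "finite L"
    by (rule finite_subset[of _ "B \<times> B"]) (auto simp: L_def assms)
  moreover have "D \<inter> (L \<union> prod.swap ` L) = {}" "L \<inter> prod.swap ` L = {}"
    unfolding D_def L_def by auto
  ultimately have "(\<Sum>(y, z)\<in>B \<times> B. f y z) =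
      (\<Sum>(y, z)\<in>D. f y z) + ((\<Sum>(y, z)\<in>L. f y z) + (\<Sum>(y, z)\<in>prod.swap ` L. f y z))"
    unfolding B_square using assms by (simp add: D_def sum.union_disjoint)
  also have "(\<Sum>(y, z)\<in>D. f y z) = (\<Sum>y\<in>B. f y y)"
    unfolding D_def by (subst sum.reindex) (auto simp: inj_on_def)
  also have "(\<Sum>(y, z)\<in>prod.swap ` L. f y z) = (\<Sum>(y, z)\<in>L. f z y)"
    by (subst sum.reindex) (auto simp: inj_on_def case_prod_beta)
  finally show ?thesis
    by (simp add: sum.cartesian_product L_def sum.distrib case_prod_beta)
qed

lemma Phi_eq_cis:
  "Phi \<theta> y = cis (real (hamming_weight y) * \<theta>) / complex_of_real (sqrt 2) ^ length y"
proof (induction y)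
  case Nil
  then show ?case by (simp add: Phi_def hamming_weight_def)
next
  case (Cons b y)
  have "Phi \<theta> (b # y) = plus_amp \<theta> b * Phi \<theta> y" by (simp add: Phi_def)
  then show ?case
    using Cons.IH by (cases b) (simp_all add: plus_amp_def hamming_weight_def cis_mult algebra_simps)
qed

lemma Phi_mult_cnj_Phi:
  assumes "length y = n" "length z = n"
  shows "Phi \<theta> y * cnj (Phi \<theta> z) =
    cis ((real (hamming_weight y) - real (hamming_weight z)) * \<theta>) / 2 ^ n"
proof -
  have "Phi \<theta> y * cnj (Phi \<theta> z) =
      cis (real (hamming_weight y) * \<theta>) * cis (- (real (hamming_weight z) * \<theta>)) /
      (complex_of_real (sqrt 2) ^ n * complex_of_real (sqrt 2) ^ n)"
    using assms by (simp add: Phi_eq_cis cis_cnj)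
  also have "cis (real (hamming_weight y) * \<theta>) * cis (- (real (hamming_weight z) * \<theta>)) =
      cis ((real (hamming_weight y) - real (hamming_weight z)) * \<theta>)"
    by (simp only: cis_mult) (simp add: algebra_simps)
  also have "complex_of_real (sqrt 2) ^ n * complex_of_real (sqrt 2) ^ n = 2 ^ n"
    by (simp flip: power_mult_distrib of_real_mult)
  finally show ?thesis .
qed

lemma W_Phi_eq_cis:
  assumes "y \<in> bitstrings n" "z \<in> bitstrings n"
  shows "2 ^ n * W_Phi n \<theta> y z =
    (if y = z then 1 else 0) - cis ((real (hamming_weight y) - real (hamming_weight z)) * \<theta>)"
  using assms by (simp add: W_Phi_def Phi_mult_cnj_Phi bitstrings_def right_diff_distrib)

lemma hermitian_POVM_element:
  assumes "is_POVM n P" "x \<in> bitstrings n"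
  shows "hermitian n (P x)"
  using assms by (simp add: is_POVM_def psd_def)

lemma trace_W_Phi_hermitian:
  assumes "hermitian n A"
  shows "2 ^ n * trace_prod n (W_Phi n \<theta>) A = - of_real (2 *
    (\<Sum>(y, z)\<in>{(y, z). y \<in> bitstrings n \<and> z \<in> bitstrings n \<and> y < z}.
       Re (cis ((real (hamming_weight z) - real (hamming_weight y)) * \<theta>) * A y z)))"
    (is "_ = - of_real (2 * (\<Sum>(y, z)\<in>?L. ?re y z))")
proof -
  define e where "e y z = 2 ^ n * W_Phi n \<theta> y z * A z y" for y z
  have diagonal: "e y y = 0" if "y \<in> bitstrings n" for y
    using that by (simp add: e_def W_Phi_eq_cis)
  have conjugate_pair: "e y z + e z y = - of_real (2 * ?re y z)"
    if "y \<in> bitstrings n" "z \<in> bitstrings n" "y < z" for y z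
  proof -
    define w where "w = cis ((real (hamming_weight z) - real (hamming_weight y)) * \<theta>) * A y z"
    have "z \<noteq> y"
      using \<open>y < z\<close> by simp
    then have "e z y = - w"
      using that by (simp add: e_def w_def W_Phi_eq_cis)
    moreover have "e y z = - cnj w"
    proof -
      have hermitian_entry: "A z y = cnj (A y z)"
        using assms that unfolding hermitian_def by blast
      have cis_flip: "cis ((real (hamming_weight y) - real (hamming_weight z)) * \<theta>) =
          cnj (cis ((real (hamming_weight z) - real (hamming_weight y)) * \<theta>))"
        by (subst cis_cnj) (simp add: algebra_simps)
      have "e y z = - (cis ((real (hamming_weight y) - real (hamming_weight z)) * \<theta>) * A z y)"
        using that \<open>z \<noteq> y\<close> by (simp add: e_def W_Phi_eq_cis)
      then show ?thesis
        unfolding hermitian_entry cis_flip w_def by (simp only: complex_cnj_mult)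
    qed
    ultimately show ?thesis
      unfolding w_def[symmetric] by (metis complex_add_cnj add.commute minus_add_distrib)
  qed
  have "2 ^ n * trace_prod n (W_Phi n \<theta>) A = (\<Sum>y\<in>bitstrings n. \<Sum>z\<in>bitstrings n. e y z)"
    by (simp add: trace_prod_def e_def sum_distrib_left mult.assoc)
  also have "\<dots> = (\<Sum>(y, z)\<in>?L. e y z + e z y)"
    by (simp add: sum_square_diagonal_pairs finite_bitstrings diagonal)
  also have "\<dots> = (\<Sum>(y, z)\<in>?L. - of_real (2 * ?re y z))"
    by (rule sum.cong) (auto simp only: conjugate_pair)
  also have "\<dots> = - of_real (2 * (\<Sum>(y, z)\<in>?L. ?re y z))"
    by (simp only: split_def sum_negf sum_distrib_left of_real_sum of_real_mult)
  finally show ?thesis .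
qed

theorem theorem1:
  fixes n :: nat and P :: "bool list \<Rightarrow> op" and \<theta> :: real and x :: "bool list"
  assumes "is_POVM n P" and "x \<in> bitstrings n"
  shows "Q_Phi n \<theta> (P x) =
    2 * \<bar>\<Sum>(y, z)\<in>{(y, z). y \<in> bitstrings n \<and> z \<in> bitstrings n \<and> y < z}.
           - Re (P x y z) * cos ((real (hamming_weight z) - real (hamming_weight y)) * \<theta>)
           + Im (P x y z) * sin ((real (hamming_weight z) - real (hamming_weight y)) * \<theta>)\<bar>"
proof -
  have "Q_Phi n \<theta> (P x) = cmod (2 ^ n * trace_prod n (W_Phi n \<theta>) (P x))"
    by (simp add: Q_Phi_def norm_mult norm_power)
  also have "\<dots> = 2 * \<bar>\<Sum>(y, z)\<in>{(y, z). y \<in> bitstrings n \<and> z \<in> bitstrings n \<and> y < z}.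
       Re (cis ((real (hamming_weight z) - real (hamming_weight y)) * \<theta>) * P x y z)\<bar>"
    unfolding trace_W_Phi_hermitian[OF hermitian_POVM_element[OF assms]] norm_minus_cancel norm_of_real
    by simp
  also have "\<dots> = 2 * \<bar>\<Sum>(y, z)\<in>{(y, z). y \<in> bitstrings n \<and> z \<in> bitstrings n \<and> y < z}.
           - Re (P x y z) * cos ((real (hamming_weight z) - real (hamming_weight y)) * \<theta>)
           + Im (P x y z) * sin ((real (hamming_weight z) - real (hamming_weight y)) * \<theta>)\<bar>"
    by (subst abs_minus_cancel[symmetric], simp only: sum_negf[symmetric])
      (simp add: case_prod_beta cis.ctr algebra_simps)
  finally show ?thesis .
qed

end
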